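(* There exists a finite simple graph $G$ such that $4=\pi'(G)<\chi'(G)=5$.
   Context: An orthogonal $d$-edge-coloring of $G$ is a function $f:E(G)\to\mathbb{R}^d\setminus\{0\}$ such that $f(e)\perp f(e')$ whenever the distinct edges $e,e'$ share an endpoint. The orthogonal index $\pi'(G)$ is the minimum $d$ for which $G$ has an orthogonal $d$-edge-coloring. $\chi'(G)$ is the chromatic index. *)

theory Defs
  imports Complex_Main
begin

definition simple_graph :: "'a set \<Rightarrow> 'a set set \<Rightarrow> bool" where
  "simple_graph V E \<longleftrightarrow> finite V \<and> (\<forall>e\<in>E. e \<subseteq> V \<and> card e = 2)"

text \<open>Vectors of R^d are represented as functions nat => real vanishing outside {..<d};
  the standard inner product is the sum over i < d.\<close>
definition orthogonal_edge_coloring :: "'a set set \<Rightarrow> nat \<Rightarrow> ('a set \<Rightarrow> nat \<Rightarrow> real) \<Rightarrow> bool" where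
  "orthogonal_edge_coloring E d f \<longleftrightarrow>
     (\<forall>e\<in>E. (\<forall>i\<ge>d. f e i = 0) \<and> (\<exists>i<d. f e i \<noteq> 0)) \<and>
     (\<forall>e\<in>E. \<forall>e'\<in>E. e \<noteq> e' \<and> e \<inter> e' \<noteq> {} \<longrightarrow> (\<Sum>i<d. f e i * f e' i) = 0)"

definition orthogonal_index :: "'a set set \<Rightarrow> nat" where
  "orthogonal_index E = (LEAST d. \<exists>f. orthogonal_edge_coloring E d f)"

definition proper_edge_coloring :: "'a set set \<Rightarrow> nat \<Rightarrow> ('a set \<Rightarrow> nat) \<Rightarrow> bool" where
  "proper_edge_coloring E k c \<longleftrightarrow>
     (\<forall>e\<in>E. c e < k) \<and>
     (\<forall>e\<in>E. \<forall>e'\<in>E. e \<noteq> e' \<and> e \<inter> e' \<noteq> {} \<longrightarrow> c e \<noteq> c e')"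

definition chromatic_index :: "'a set set \<Rightarrow> nat" where
  "chromatic_index E = (LEAST k. \<exists>c. proper_edge_coloring E k c)"

end

theory Submission
  imports Defs "HOL-Library.Function_Algebras"
begin

text \<open>The rook's graph \<open>K\<^sub>3 \<box> K\<^sub>3\<close> is 4-regular on 9 vertices, so it has 18 edges,
  while a colour class of a proper edge colouring is a matching and has at most 4 edges: five
  colours are needed, and five suffice. The four edges at a vertex carry pairwise orthogonal
  nonzero vectors, which are linearly independent, so an orthogonal colouring needs dimension 4;
  an explicit assignment of vectors in \<open>\<real>\<^sup>4\<close> shows that 4 is enough.\<close>

lemma sum_fun_apply: "(\<Sum>a\<in>A. g a) x = (\<Sum>a\<in>A. g a x)"
  for g :: "'a \<Rightarrow> 'b \<Rightarrow> 'c::comm_monoid_add"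
  by (induction A rule: infinite_finite_induct) auto

lemma pairwise_orthogonal_card_le:
  fixes S :: "(nat \<Rightarrow> real) set"
  assumes support: "\<And>v i. v \<in> S \<Longrightarrow> d \<le> i \<Longrightarrow> v i = 0"
    and nonzero: "0 \<notin> S"
    and orthogonal: "\<And>v w. v \<in> S \<Longrightarrow> w \<in> S \<Longrightarrow> v \<noteq> w \<Longrightarrow> (\<Sum>i<d. v i * w i) = 0"
  shows "card S \<le> d"
proof -
  interpret coordinatewise: vector_space "\<lambda>(c::real) (v::nat \<Rightarrow> real) i. c * v i"
    by unfold_locales (auto simp: algebra_simps)
  define unit :: "nat \<Rightarrow> nat \<Rightarrow> real" where "unit j i = (if i = j then 1 else 0)" for j i
  have "S \<subseteq> coordinatewise.span (unit ` {..<d})"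
  proof
    fix v assume "v \<in> S"
    have "(\<lambda>i. v j * unit j i) \<in> coordinatewise.span (unit ` {..<d})" if "j < d" for j
      using coordinatewise.span_scale[OF coordinatewise.span_base, of "unit j"] that by simp
    then have "(\<Sum>j<d. (\<lambda>i. v j * unit j i)) \<in> coordinatewise.span (unit ` {..<d})"
      by (intro coordinatewise.span_sum) simp
    moreover have "(\<Sum>j<d. (\<lambda>i. v j * unit j i)) = v"
    proof
      fix i show "(\<Sum>j<d. (\<lambda>i. v j * unit j i)) i = v i"
        using support[OF \<open>v \<in> S\<close>, of i]
        by (cases "i < d") (simp_all add: sum_fun_apply unit_def if_distrib[of "times _"] cong: if_cong)
    qed
    ultimately show "v \<in> coordinatewise.span (unit ` {..<d})" by simp
  qed
  moreover have "coordinatewise.independent S"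
  proof (unfold coordinatewise.independent_explicit_module, intro allI impI)
    fix T u w
    assume T: "finite T" "T \<subseteq> S" and combination: "(\<Sum>v\<in>T. (\<lambda>i. u v * v i)) = 0" and w: "w \<in> T"
    have "0 = (\<Sum>i<d. (\<Sum>v\<in>T. u v * v i) * w i)"
      using combination by (simp add: sum_fun_apply fun_eq_iff)
    also have "\<dots> = (\<Sum>v\<in>T. u v * (\<Sum>i<d. v i * w i))"
      by (simp add: sum_distrib_left sum_distrib_right mult.assoc sum.swap[of _ T])
    also have "\<dots> = u w * (\<Sum>i<d. w i * w i)"
      using T w by (subst sum.remove[OF T(1) w]) (simp add: orthogonal subset_iff)
    finally have "u w * (\<Sum>i<d. w i * w i) = 0" ..
    moreover have "(\<Sum>i<d. w i * w i) \<noteq> 0"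
    proof
      assume "(\<Sum>i<d. w i * w i) = 0"
      then have "\<forall>i<d. w i = 0" by (simp add: sum_nonneg_eq_0_iff)
      moreover have "w \<in> S" using T w by blast
      ultimately have "w i = 0" for i using support[of w i] by (cases "i < d") auto
      then show False using nonzero T w by (metis subsetD zero_fun_def ext)
    qed
    ultimately show "u w = 0" by simp
  qed
  ultimately have "card S \<le> card (unit ` {..<d})"
    using coordinatewise.independent_span_bound by blast
  also have "\<dots> \<le> d" using card_image_le[of "{..<d}" unit] by simp
  finally show ?thesis .
qed

lemma card_star_le_orthogonal_dim:
  assumes colouring: "orthogonal_edge_coloring E d f"
    and star: "S \<subseteq> E" "\<And>e. e \<in> S \<Longrightarrow> v \<in> e"
  shows "card S \<le> d"
proof -
  have support: "\<And>e i. e \<in> S \<Longrightarrow> d \<le> i \<Longrightarrow> f e i = 0"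
    and nonzero: "\<And>e. e \<in> S \<Longrightarrow> \<exists>i<d. f e i \<noteq> 0"
    and orthogonal: "\<And>e e'. e \<in> S \<Longrightarrow> e' \<in> S \<Longrightarrow> e \<noteq> e' \<Longrightarrow> (\<Sum>i<d. f e i * f e' i) = 0"
    using colouring star unfolding orthogonal_edge_coloring_def by (blast, blast, blast)
  have "inj_on f S"
  proof
    fix e e' assume "e \<in> S" "e' \<in> S" "f e = f e'"
    moreover obtain i where "i < d" "f e i \<noteq> 0" using nonzero \<open>e \<in> S\<close> by blast
    then have "(\<Sum>i<d. f e i * f e i) \<noteq> 0" by (force simp: sum_nonneg_eq_0_iff)
    ultimately show "e = e'" using orthogonal by metis
  qed
  then have "card S = card (f ` S)" by (rule card_image[symmetric])
  also have "\<dots> \<le> d"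
  proof (rule pairwise_orthogonal_card_le)
    show "0 \<notin> f ` S" using nonzero by fastforce
  qed (use support orthogonal in auto)
  finally show ?thesis .
qed

lemma card_matching_le:
  assumes "finite V" "\<And>e. e \<in> M \<Longrightarrow> e \<subseteq> V \<and> card e = 2" "pairwise disjnt M"
  shows "2 * card M \<le> card V"
proof -
  have "card (\<Union>M) = (\<Sum>e\<in>M. card e)"
    using assms by (intro card_Union_disjoint) (auto intro: finite_subset)
  also have "\<dots> = 2 * card M" using assms(2) by simp
  finally show ?thesis using assms by (metis Union_least card_mono)
qed

lemma card_edges_le_colours_mult_half:
  assumes graph: "simple_graph V E" and colouring: "proper_edge_coloring E k c"
  shows "card E \<le> k * (card V div 2)"
proof -
  let ?class = "\<lambda>j. {e \<in> E. c e = j}"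
  have "card (?class j) \<le> card V div 2" for j
  proof -
    have "pairwise disjnt (?class j)"
      using colouring unfolding pairwise_def disjnt_def proper_edge_coloring_def by auto
    then have "2 * card (?class j) \<le> card V"
      using graph unfolding simple_graph_def by (intro card_matching_le) auto
    then show ?thesis by linarith
  qed
  moreover have "E = (\<Union>j<k. ?class j)"
    using colouring unfolding proper_edge_coloring_def by auto
  then have "card E \<le> (\<Sum>j<k. card (?class j))"
    by (metis card_UN_le finite_lessThan)
  ultimately show ?thesis
    using sum_mono[of "{..<k}" "\<lambda>j. card (?class j)" "\<lambda>_. card V div 2"] by simp
qed

text \<open>Finite edge sets are given by tables of entries \<open>((u, v), x)\<close> with \<open>u < v\<close>, one per edge
  \<open>{u, v}\<close>; \<open>table_lookup\<close> recovers \<open>x\<close> from the edge via its least and greatest vertex.\<close>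

definition edge_table :: "(('a::linorder \<times> 'a) \<times> 'b) list \<Rightarrow> bool" where
  "edge_table T \<longleftrightarrow> distinct (map fst T) \<and> (\<forall>((u, v), _)\<in>set T. u < v)"

definition table_edges :: "(('a \<times> 'a) \<times> 'b) list \<Rightarrow> 'a set set" where
  "table_edges T = (\<lambda>((u, v), _). {u, v}) ` set T"

definition table_lookup :: "(('a::linorder \<times> 'a) \<times> 'b) list \<Rightarrow> 'a set \<Rightarrow> 'b" where
  "table_lookup T e = the (map_of T (Min e, Max e))"

lemma edge_table_less:
  assumes "edge_table T" "((u, v), x) \<in> set T"
  shows "u < v"
  using assms unfolding edge_table_def by fastforce

lemma table_lookup_edge:
  assumes "edge_table T" "((u, v), x) \<in> set T"
  shows "table_lookup T {u, v} = x"
  using assms edge_table_less[OF assms] unfolding edge_table_def table_lookup_def by simp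

lemma table_lookup_all:
  assumes "edge_table T" "list_all (\<lambda>(_, x). P x) T" "e \<in> table_edges T"
  shows "P (table_lookup T e)"
  using assms by (auto simp: table_edges_def list_all_iff table_lookup_edge)

lemma table_lookup_pairwise:
  assumes "edge_table T"
    and "list_all (\<lambda>((u, v), x). list_all (\<lambda>((u', v'), y).
            (u, v) = (u', v') \<or> u \<noteq> u' \<and> u \<noteq> v' \<and> v \<noteq> u' \<and> v \<noteq> v' \<or> R x y) T) T"
    and "e \<in> table_edges T" "e' \<in> table_edges T" "e \<noteq> e'" "e \<inter> e' \<noteq> {}"
  shows "R (table_lookup T e) (table_lookup T e')"
  using assms by (fastforce simp: table_edges_def list_all_iff table_lookup_edge)

lemma card_table_edges:
  assumes "edge_table T"
  shows "card (table_edges T) = length T"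
proof -
  have "inj_on (\<lambda>((u, v), _). {u, v}) (set T)"
  proof (rule inj_onI)
    fix p q assume p: "p \<in> set T" and q: "q \<in> set T"
      and same_edge: "(\<lambda>((u, v), _). {u, v}) p = (\<lambda>((u, v), _). {u, v}) q"
    obtain u v x u' v' y where pq: "p = ((u, v), x)" "q = ((u', v'), y)" by (metis prod.collapse)
    moreover have "u < v" "u' < v'"
      using edge_table_less[OF assms] p q unfolding pq by blast+
    ultimately have "fst p = fst q" using same_edge by (auto simp: doubleton_eq_iff)
    moreover have "snd p = snd q"
      using assms p q eq_key_imp_eq_value \<open>fst p = fst q\<close>
      unfolding edge_table_def by (metis prod.collapse)
    ultimately show "p = q" by (simp add: prod_eq_iff)
  qed
  then show ?thesis
    using assms unfolding edge_table_def table_edges_def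
    by (simp add: card_image distinct_card distinct_map)
qed

definition vec_of_list :: "real list \<Rightarrow> nat \<Rightarrow> real" where
  "vec_of_list xs i = (if i < length xs then xs ! i else 0)"

lemma inner_vec_of_list:
  assumes "length xs = d" "length ys = d"
  shows "(\<Sum>i<d. vec_of_list xs i * vec_of_list ys i) = sum_list (map2 (*) xs ys)"
  using assms by (simp add: sum_list_sum_nth vec_of_list_def atLeast0LessThan)

lemma vec_of_list_nonzero_iff:
  assumes "length xs = d"
  shows "(\<exists>i<d. vec_of_list xs i \<noteq> 0) \<longleftrightarrow> (\<exists>a\<in>set xs. a \<noteq> 0)"
  using assms by (force simp: vec_of_list_def in_set_conv_nth)

text \<open>The rook's graph with square \<open>(r, c)\<close> numbered \<open>3 r + c\<close>; each edge carries its
  colour and its vector.\<close>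

definition rook_table :: "((nat \<times> nat) \<times> nat \<times> real list) list" where
  "rook_table =
    [((0, 1), 0, [0, 0, 0, 1]), ((0, 2), 2, [0, 0, 1, 0]), ((0, 3), 1, [1, 1, 0, 0]),
     ((0, 6), 3, [1, -1, 0, 0]), ((1, 2), 3, [0, 1, 0, 0]), ((1, 4), 1, [1, 0, -1, 0]),
     ((1, 7), 2, [1, 0, 1, 0]), ((2, 5), 0, [1, 0, 0, -1]), ((2, 8), 1, [1, 0, 0, 1]),
     ((3, 4), 0, [1, -1, 1, -1]), ((3, 5), 2, [1, -1, -1, 1]), ((3, 6), 4, [0, 0, 1, 1]),
     ((4, 5), 3, [1, 1, 1, 1]), ((4, 7), 4, [0, 1, 0, -1]), ((5, 8), 4, [0, 1, -1, 0]),
     ((6, 7), 0, [1, 1, -1, 1]), ((6, 8), 2, [1, 1, 1, -1]), ((7, 8), 3, [-1, 1, 1, 1])]"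

definition rook_edges :: "nat set set" where
  "rook_edges = table_edges rook_table"

definition rook_colouring :: "nat set \<Rightarrow> nat" where
  "rook_colouring e = fst (table_lookup rook_table e)"

definition rook_vectors :: "nat set \<Rightarrow> nat \<Rightarrow> real" where
  "rook_vectors e = vec_of_list (snd (table_lookup rook_table e))"

lemma edge_table_rook: "edge_table rook_table"
  by (simp add: edge_table_def rook_table_def)

lemma simple_graph_rook: "simple_graph {..<9} rook_edges"
  by (auto simp: simple_graph_def rook_edges_def table_edges_def rook_table_def)

lemma card_rook_edges: "card rook_edges = 18"
  by (simp add: rook_edges_def card_table_edges edge_table_rook) (simp add: rook_table_def)

lemma rook_star: "{{0, 1}, {0, 2}, {0, 3}, {0, 6}} \<subseteq> rook_edges"
  by (simp add: rook_edges_def table_edges_def rook_table_def)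

lemma proper_edge_coloring_rook: "proper_edge_coloring rook_edges 5 rook_colouring"
proof -
  have "list_all (\<lambda>(_, x). fst x < 5) rook_table"
    and "list_all (\<lambda>((u, v), x). list_all (\<lambda>((u', v'), y).
           (u, v) = (u', v') \<or> u \<noteq> u' \<and> u \<noteq> v' \<and> v \<noteq> u' \<and> v \<noteq> v' \<or> fst x \<noteq> fst y)
         rook_table) rook_table"
    by (simp_all add: rook_table_def)
  note colours = table_lookup_all[OF edge_table_rook this(1)]
    and distinct_colours = table_lookup_pairwise[OF edge_table_rook this(2)]
  show ?thesis
    unfolding proper_edge_coloring_def rook_colouring_def rook_edges_def
    using colours distinct_colours by blast
qed

lemma orthogonal_edge_coloring_rook: "orthogonal_edge_coloring rook_edges 4 rook_vectors"
proof -
  have "list_all (\<lambda>(_, x). length (snd x) = 4 \<and> (\<exists>a\<in>set (snd x). a \<noteq> 0)) rook_table"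
    and "list_all (\<lambda>((u, v), x). list_all (\<lambda>((u', v'), y).
           (u, v) = (u', v') \<or> u \<noteq> u' \<and> u \<noteq> v' \<and> v \<noteq> u' \<and> v \<noteq> v' \<or>
           sum_list (map2 (*) (snd x) (snd y)) = 0) rook_table) rook_table"
    by (simp_all add: rook_table_def)
  note vectors = table_lookup_all[OF edge_table_rook this(1)]
    and products = table_lookup_pairwise[OF edge_table_rook this(2)]
  show ?thesis
    unfolding orthogonal_edge_coloring_def rook_vectors_def rook_edges_def
  proof (intro conjI ballI impI allI)
    fix e assume "e \<in> table_edges rook_table"
    with vectors show "vec_of_list (snd (table_lookup rook_table e)) i = 0" if "4 \<le> i" for i
      using that by (simp add: vec_of_list_def)
    from vectors show "\<exists>i<4. vec_of_list (snd (table_lookup rook_table e)) i \<noteq> 0"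
      using \<open>e \<in> table_edges rook_table\<close> vec_of_list_nonzero_iff by blast
  next
    fix e e' assume "e \<in> table_edges rook_table" "e' \<in> table_edges rook_table" "e \<noteq> e' \<and> e \<inter> e' \<noteq> {}"
    with vectors products show "(\<Sum>i<4. vec_of_list (snd (table_lookup rook_table e)) i *
        vec_of_list (snd (table_lookup rook_table e')) i) = 0"
      by (simp add: inner_vec_of_list)
  qed
qed

theorem mainTheorem6:
  shows "\<exists>(V::nat set) E. simple_graph V E \<and> orthogonal_index E = 4 \<and> chromatic_index E = 5"
proof (intro exI conjI)
  show "simple_graph {..<9} rook_edges" by (rule simple_graph_rook)
  show "orthogonal_index rook_edges = 4"
    unfolding orthogonal_index_def
  proof (rule Least_equality)
    show "\<exists>f. orthogonal_edge_coloring rook_edges 4 f"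
      using orthogonal_edge_coloring_rook by blast
  next
    fix d assume "\<exists>f. orthogonal_edge_coloring rook_edges d f"
    then obtain f where "orthogonal_edge_coloring rook_edges d f" ..
    then have "card {{0, 1}, {0, 2}, {0, 3}, {0, 6::nat}} \<le> d"
      using rook_star by (rule card_star_le_orthogonal_dim[where v = 0]) auto
    then show "4 \<le> d" by (simp add: doubleton_eq_iff)
  qed
  show "chromatic_index rook_edges = 5"
    unfolding chromatic_index_def
  proof (rule Least_equality)
    show "\<exists>c. proper_edge_coloring rook_edges 5 c"
      using proper_edge_coloring_rook by blast
  next
    fix k assume "\<exists>c. proper_edge_coloring rook_edges k c"
    then obtain c where "proper_edge_coloring rook_edges k c" ..
    from card_edges_le_colours_mult_half[OF simple_graph_rook this] show "5 \<le> k"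
      by (simp add: card_rook_edges)
  qed
qed

end
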